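(* Let $\Delta=(\alpha_1,\dots,\alpha_N)$ be ordered. Let $B\subset{\cal B}(\Delta)$ be the set of bases $b=(\alpha_{i_1},\dots,\alpha_{i_r})$, $i_1<\dots<i_r$, such that for every index $j\notin\{i_1,\dots,i_r\}$ the set $\{\alpha_j\}\cup\{\alpha_{i_p}: i_p>j\}$ is linearly independent. Then $(\phi_b)_{b\in B}$ is a basis of $S_\Delta$. Moreover, consider the space of all linear relations $\sum_{\sigma\in{\cal B}(\Delta)}c_\sigma\phi_\sigma=0$, i.e. the kernel of the map from the free vector space on symbols $[\sigma]$, $\sigma\in{\cal B}(\Delta)$, to $R_\Delta$. This space is spanned by the Orlik–Solomon relations $$r_{\sigma,\alpha}=[\sigma]-\sum_{\beta\in\sigma,\ c_{\alpha\beta}\ne0}c_{\alpha\beta}\,[\sigma\cup\{\alpha\}\setminus\{\beta\}],$$ for $\sigma\in{\cal B}(\Delta)$ and $\alpha\in\Delta\setminus\sigma$, where $\alpha=\sum_{\beta\in\sigma}c_{\alpha\beta}\beta$.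
   Context: Let $k$ be a field of characteristic zero, $V$ a $k$-vector space of dimension $r$, and $V^*$ its dual, with $S(V)$ identified with polynomial functions on $V^*$. Let $\Delta\subset V$ be a finite set of nonzero vectors spanning $V$, and $R_\Delta=\Delta^{-1}S(V)$ (rational functions on $V^*$ with the elements of $\Delta$ inverted). ${\cal B}(\Delta)$ is the set of subsets of $\Delta$ forming a basis of $V$. For $\sigma\in{\cal B}(\Delta)$, $\phi_\sigma=1/\prod_{\alpha\in\sigma}\alpha$. $S_\Delta$ is the $k$-span of the $\phi_\sigma$, $\sigma\in{\cal B}(\Delta)$. Note that for $c_{\alpha\beta}\neq0$, $\sigma\cup\{\alpha\}\setminus\{\beta\}\in{\cal B}(\Delta)$. *)

theory Defs
  imports "HOL-Analysis.Analysis" "HOL-Library.Function_Algebras"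
begin

text \<open>V is modelled as 'n => 'k (finite index type 'n, dimension r = CARD('n)),
  V* likewise, with the pairing below. Delta is a list alpha_0,...,alpha_{N-1},
  and subsets of Delta are represented by index sets.\<close>

definition vscale :: "'k::field \<Rightarrow> ('n \<Rightarrow> 'k) \<Rightarrow> ('n \<Rightarrow> 'k)" where
  "vscale c v = (\<lambda>i. c * v i)"

definition pairing :: "('n::finite \<Rightarrow> 'k::field) \<Rightarrow> ('n \<Rightarrow> 'k) \<Rightarrow> 'k" where
  "pairing v x = (\<Sum>i\<in>UNIV. v i * x i)"

definition lin_indep :: "('n \<Rightarrow> 'k::field) set \<Rightarrow> bool" where
  "lin_indep S \<longleftrightarrow> \<not> module.dependent vscale S"

definition calB :: "(nat \<Rightarrow> ('n::finite \<Rightarrow> 'k::field)) \<Rightarrow> nat \<Rightarrow> nat set set" where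
  "calB \<alpha> N = {\<sigma>. \<sigma> \<subseteq> {..<N} \<and> lin_indep (\<alpha> ` \<sigma>) \<and> module.span vscale (\<alpha> ` \<sigma>) = UNIV}"

definition Bset :: "(nat \<Rightarrow> ('n::finite \<Rightarrow> 'k::field)) \<Rightarrow> nat \<Rightarrow> nat set set" where
  "Bset \<alpha> N = {b \<in> calB \<alpha> N. \<forall>j<N. j \<notin> b \<longrightarrow> lin_indep (\<alpha> ` ({j} \<union> {i\<in>b. i > j}))}"

definition regular_set :: "(nat \<Rightarrow> ('n::finite \<Rightarrow> 'k::field)) \<Rightarrow> nat \<Rightarrow> ('n \<Rightarrow> 'k) set" where
  "regular_set \<alpha> N = {x. \<forall>i<N. pairing (\<alpha> i) x \<noteq> 0}"

definition phi :: "(nat \<Rightarrow> ('n::finite \<Rightarrow> 'k::field)) \<Rightarrow> nat set \<Rightarrow> ('n \<Rightarrow> 'k) \<Rightarrow> 'k" where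
  "phi \<alpha> \<sigma> x = 1 / (\<Prod>i\<in>\<sigma>. pairing (\<alpha> i) x)"

definition coef :: "(nat \<Rightarrow> ('n::finite \<Rightarrow> 'k::field)) \<Rightarrow> nat set \<Rightarrow> nat \<Rightarrow> nat \<Rightarrow> 'k" where
  "coef \<alpha> \<sigma> a = (THE c. (\<forall>\<beta>. \<beta> \<notin> \<sigma> \<longrightarrow> c \<beta> = 0) \<and>
                          \<alpha> a = (\<Sum>\<beta>\<in>\<sigma>. vscale (c \<beta>) (\<alpha> \<beta>)))"

text \<open>Elements of the free vector space on symbols [sigma] are functions nat set => 'k.\<close>
definition fscale :: "'k::field \<Rightarrow> (nat set \<Rightarrow> 'k) \<Rightarrow> (nat set \<Rightarrow> 'k)" where
  "fscale t f = (\<lambda>\<sigma>. t * f \<sigma>)"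

definition os_rel :: "(nat \<Rightarrow> ('n::finite \<Rightarrow> 'k::field)) \<Rightarrow> nat set \<Rightarrow> nat \<Rightarrow> nat set \<Rightarrow> 'k" where
  "os_rel \<alpha> \<sigma> a = (\<lambda>\<tau>. (if \<tau> = \<sigma> then 1 else 0)
      - (\<Sum>\<beta>\<in>\<sigma>. if coef \<alpha> \<sigma> a \<beta> \<noteq> 0 \<and> \<tau> = insert a (\<sigma> - {\<beta>}) then coef \<alpha> \<sigma> a \<beta> else 0))"

end

(*
  Each Orlik-Solomon relation r(sigma,a) holds because dividing alpha_a = sum_beta c(a,beta) alpha_beta
  by alpha_a * prod(sigma) gives the partial fraction identity
  phi_sigma = sum_beta c(a,beta) phi_(sigma + a - beta).
  If a basis sigma is not in B, some alpha_j with j not in sigma lies in the span of the elements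
  of sigma after j, and r(sigma,j) rewrites [sigma] through bases of smaller index sum; so modulo
  the Orlik-Solomon relations every [sigma] is a combination of the [b], b in B.

  Independence of the phi_b, b in B, is proved by deletion-restriction, for the restrictions of
  the alpha_i to a subspace W of V*. Clearing denominators turns a relation into a polynomial
  identity, which extends from the regular points to all of W because k is infinite. On the
  hyperplane alpha_m = 0 of W it becomes a relation among the terms of the sets containing m;
  what is left is a relation for alpha_0, ..., alpha_(m-1).

  Finally, a relation minus its straightening is a relation supported on B, hence zero, so the
  Orlik-Solomon relations span all relations.
*)

theory Submission
  imports Defs "HOL-Computational_Algebra.Polynomial"
begin

section \<open>Linear combinations and coordinates\<close>

global_interpretation V: vector_space "vscale :: 'k::field \<Rightarrow> ('n \<Rightarrow> 'k) \<Rightarrow> ('n \<Rightarrow> 'k)"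
  by unfold_locales (simp_all add: vscale_def fun_eq_iff algebra_simps)

global_interpretation Free: module "fscale :: 'k::field \<Rightarrow> (nat set \<Rightarrow> 'k) \<Rightarrow> (nat set \<Rightarrow> 'k)"
  by unfold_locales (simp_all add: fscale_def fun_eq_iff algebra_simps)

lemma sum_fun_apply: "(\<Sum>i\<in>A. f i) x = (\<Sum>i\<in>A. f i x)"
  by (induction A rule: infinite_finite_induct) auto

definition lincomb :: "(nat \<Rightarrow> ('n \<Rightarrow> 'k::field)) \<Rightarrow> nat set \<Rightarrow> (nat \<Rightarrow> 'k) \<Rightarrow> ('n \<Rightarrow> 'k)" where
  "lincomb \<alpha> S c = (\<Sum>i\<in>S. vscale (c i) (\<alpha> i))"

lemma lincomb_cong: "(\<And>i. i \<in> S \<Longrightarrow> c i = d i) \<Longrightarrow> lincomb \<alpha> S c = lincomb \<alpha> S d"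
  unfolding lincomb_def by (auto intro: sum.cong)

lemma lincomb_mono_neutral:
  assumes "finite T" "S \<subseteq> T" "\<And>i. i \<in> T - S \<Longrightarrow> c i = 0"
  shows "lincomb \<alpha> T c = lincomb \<alpha> S c"
  unfolding lincomb_def using assms
  by (intro sum.mono_neutral_right) (auto simp: vscale_def fun_eq_iff)

lemma lincomb_diff: "lincomb \<alpha> S (\<lambda>i. c i - d i) = lincomb \<alpha> S c - lincomb \<alpha> S d"
  by (simp add: lincomb_def vscale_def fun_eq_iff sum_fun_apply left_diff_distrib sum_subtractf)

lemma pairing_lincomb: "pairing (lincomb \<alpha> S c) x = (\<Sum>i\<in>S. c i * pairing (\<alpha> i) x)"
  unfolding lincomb_def pairing_def vscale_def sum_fun_apply
  by (simp add: sum_distrib_left sum_distrib_right mult.assoc) (rule sum.swap)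

lemma pairing_add: "pairing v (x + y) = pairing v x + pairing v y"
  by (simp add: pairing_def distrib_left sum.distrib)

lemma pairing_diff: "pairing v (x - y) = pairing v x - pairing v y"
  by (simp add: pairing_def right_diff_distrib sum_subtractf)

lemma pairing_vscale: "pairing v (vscale t x) = t * pairing v x"
  by (simp add: pairing_def vscale_def sum_distrib_left mult.left_commute)

lemma pairing_unit_vector: "pairing v (\<lambda>n. if n = n0 then 1 else 0) = v n0"
  by (simp add: pairing_def if_distrib cong: if_cong)

lemma pairing_eq_0_iff: "(\<forall>x. pairing v x = 0) \<longleftrightarrow> v = 0"
proof
  assume "\<forall>x. pairing v x = 0"
  then have "v n = 0" for n
    using pairing_unit_vector[of v n] by simp
  then show "v = 0"
    by (simp add: fun_eq_iff)
qed (simp add: pairing_def)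

lemma span_image_eq_range_lincomb:
  assumes "finite S" "inj_on \<alpha> S"
  shows "V.span (\<alpha> ` S) = range (lincomb \<alpha> S)"
proof -
  have "lincomb \<alpha> S c = (\<Sum>v\<in>\<alpha> ` S. vscale (c (the_inv_into S \<alpha> v)) v)" for c
    using assms(2) by (simp add: lincomb_def sum.reindex the_inv_into_f_f)
  moreover have "(\<Sum>v\<in>\<alpha> ` S. vscale (u v) v) = lincomb \<alpha> S (u \<circ> \<alpha>)" for u
    using assms(2) by (simp add: lincomb_def sum.reindex)
  ultimately show ?thesis
    using assms(1) by (auto simp: V.span_finite)
qed

lemma lin_indep_image_lincomb_eq_0:
  assumes "lin_indep (\<alpha> ` S)" "finite S" "inj_on \<alpha> S" "lincomb \<alpha> S c = 0" "i \<in> S"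
  shows "c i = 0"
proof (rule ccontr)
  assume "c i \<noteq> 0"
  moreover have "(\<Sum>v\<in>\<alpha> ` S. vscale (c (the_inv_into S \<alpha> v)) v) = 0"
    using assms(3,4) by (simp add: lincomb_def sum.reindex the_inv_into_f_f)
  ultimately have "V.dependent (\<alpha> ` S)"
    using assms(2,3,5) by (subst V.dependent_finite)
      (auto intro!: exI[of _ "\<lambda>v. c (the_inv_into S \<alpha> v)"] simp: the_inv_into_f_f)
  then show False
    using assms(1) by (simp add: lin_indep_def)
qed

lemma calB_subset: "\<sigma> \<in> calB \<alpha> N \<Longrightarrow> \<sigma> \<subseteq> {..<N}"
  by (simp add: calB_def)

lemma calB_finite: "\<sigma> \<in> calB \<alpha> N \<Longrightarrow> finite \<sigma>"
  by (metis calB_subset finite_lessThan finite_subset)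

lemma finite_calB: "finite (calB \<alpha> N)"
  by (rule finite_subset[of _ "Pow {..<N}"]) (auto simp: calB_def)

lemma ex1_coordinates:
  assumes \<sigma>: "\<sigma> \<in> calB \<alpha> N" and inj: "inj_on \<alpha> {..<N}"
  shows "\<exists>!c. (\<forall>\<beta>. \<beta> \<notin> \<sigma> \<longrightarrow> c \<beta> = 0) \<and> w = lincomb \<alpha> \<sigma> c"
proof -
  have fin: "finite \<sigma>"
    using \<sigma> by (rule calB_finite)
  have inj\<sigma>: "inj_on \<alpha> \<sigma>"
    using inj calB_subset[OF \<sigma>] by (rule inj_on_subset)
  have "w \<in> range (lincomb \<alpha> \<sigma>)"
    using \<sigma> span_image_eq_range_lincomb[OF fin inj\<sigma>] by (simp add: calB_def)
  then obtain d where d: "w = lincomb \<alpha> \<sigma> d" by blast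
  show ?thesis
  proof (rule ex_ex1I)
    show "\<exists>c. (\<forall>\<beta>. \<beta> \<notin> \<sigma> \<longrightarrow> c \<beta> = 0) \<and> w = lincomb \<alpha> \<sigma> c"
      using d by (intro exI[of _ "\<lambda>\<beta>. if \<beta> \<in> \<sigma> then d \<beta> else 0"]) (auto intro: lincomb_cong)
  next
    fix c1 c2
    assume c1: "(\<forall>\<beta>. \<beta> \<notin> \<sigma> \<longrightarrow> c1 \<beta> = 0) \<and> w = lincomb \<alpha> \<sigma> c1"
      and c2: "(\<forall>\<beta>. \<beta> \<notin> \<sigma> \<longrightarrow> c2 \<beta> = 0) \<and> w = lincomb \<alpha> \<sigma> c2"
    have "lincomb \<alpha> \<sigma> (\<lambda>i. c1 i - c2 i) = 0"
      using c1 c2 by (simp add: lincomb_diff)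
    then have "c1 i - c2 i = 0" if "i \<in> \<sigma>" for i
      using \<sigma> fin inj\<sigma> that by (intro lin_indep_image_lincomb_eq_0) (auto simp: calB_def)
    then show "c1 = c2"
      using c1 c2 by (metis eq_iff_diff_eq_0 ext)
  qed
qed

lemma coef_eq_The:
  "coef \<alpha> \<sigma> a = (THE c. (\<forall>\<beta>. \<beta> \<notin> \<sigma> \<longrightarrow> c \<beta> = 0) \<and> \<alpha> a = lincomb \<alpha> \<sigma> c)"
  by (simp add: coef_def lincomb_def)

lemma coef_lincomb:
  assumes "\<sigma> \<in> calB \<alpha> N" "inj_on \<alpha> {..<N}"
  shows "\<alpha> a = lincomb \<alpha> \<sigma> (coef \<alpha> \<sigma> a)"
  using theI'[OF ex1_coordinates[OF assms]] by (simp add: coef_eq_The)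

lemma coef_unique:
  assumes "\<sigma> \<in> calB \<alpha> N" "inj_on \<alpha> {..<N}"
    and "\<forall>\<beta>. \<beta> \<notin> \<sigma> \<longrightarrow> c \<beta> = 0" "\<alpha> a = lincomb \<alpha> \<sigma> c"
  shows "coef \<alpha> \<sigma> a = c"
  unfolding coef_eq_The using assms by (intro the1_equality ex1_coordinates) auto

lemma coef_vanishes_outside_span:
  assumes \<sigma>: "\<sigma> \<in> calB \<alpha> N" and inj: "inj_on \<alpha> {..<N}"
    and T: "T \<subseteq> \<sigma>" "\<alpha> a \<in> V.span (\<alpha> ` T)" and "\<beta> \<notin> T"
  shows "coef \<alpha> \<sigma> a \<beta> = 0"
proof -
  have fin: "finite \<sigma>" "finite T"
    using calB_finite[OF \<sigma>] T(1) finite_subset by auto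
  have "inj_on \<alpha> T"
    using inj T(1) calB_subset[OF \<sigma>] by (rule inj_on_subset[OF _ subset_trans])
  then obtain d where d: "\<alpha> a = lincomb \<alpha> T d"
    using span_image_eq_range_lincomb[OF fin(2)] T(2) by auto
  define c where "c \<gamma> = (if \<gamma> \<in> T then d \<gamma> else 0)" for \<gamma>
  have "lincomb \<alpha> \<sigma> c = lincomb \<alpha> T c"
    using fin T(1) by (intro lincomb_mono_neutral) (auto simp: c_def)
  also have "\<dots> = lincomb \<alpha> T d"
    by (rule lincomb_cong) (simp add: c_def)
  finally have "lincomb \<alpha> \<sigma> c = lincomb \<alpha> T d" .
  then have "coef \<alpha> \<sigma> a = c"
    using \<sigma> inj T d by (intro coef_unique) (auto simp: c_def)
  then show ?thesis
    using \<open>\<beta> \<notin> T\<close> by (simp add: c_def)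
qed

lemma exchange_calB:
  assumes \<sigma>: "\<sigma> \<in> calB \<alpha> N" and inj: "inj_on \<alpha> {..<N}"
    and a: "a < N" "a \<notin> \<sigma>" and \<beta>: "\<beta> \<in> \<sigma>" "coef \<alpha> \<sigma> a \<beta> \<noteq> 0"
  shows "insert a (\<sigma> - {\<beta>}) \<in> calB \<alpha> N"
proof -
  let ?T = "\<sigma> - {\<beta>}"
  have indep: "V.independent (\<alpha> ` \<sigma>)" and span: "V.span (\<alpha> ` \<sigma>) = UNIV"
    using \<sigma> by (simp_all add: calB_def lin_indep_def)
  have notin: "\<alpha> a \<notin> V.span (\<alpha> ` ?T)"
    using coef_vanishes_outside_span[OF \<sigma> inj, of ?T a \<beta>] \<beta> by blast
  have "V.independent (\<alpha> ` ?T)"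
    by (rule V.independent_mono[OF indep]) auto
  with notin have "V.independent (insert (\<alpha> a) (\<alpha> ` ?T))"
    by (rule V.independent_insertI)
  moreover have "\<alpha> \<beta> \<in> V.span (insert (\<alpha> a) (\<alpha> ` ?T))"
  proof (rule V.in_span_insert[OF _ notin])
    show "\<alpha> a \<in> V.span (insert (\<alpha> \<beta>) (\<alpha> ` ?T))"
      using span \<beta>(1) by (simp add: insert_absorb flip: image_insert)
  qed
  then have "\<alpha> ` \<sigma> \<subseteq> V.span (insert (\<alpha> a) (\<alpha> ` ?T))"
    by (auto intro: V.span_base)
  then have "V.span (insert (\<alpha> a) (\<alpha> ` ?T)) = UNIV"
    using V.span_minimal[OF _ V.subspace_span] span by blast
  ultimately show ?thesis
    using calB_subset[OF \<sigma>] a by (auto simp: calB_def lin_indep_def)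
qed

lemma not_Bset_obtain_index:
  assumes \<sigma>: "\<sigma> \<in> calB \<alpha> N" and inj: "inj_on \<alpha> {..<N}" and "\<sigma> \<notin> Bset \<alpha> N"
  obtains j where "j < N" "j \<notin> \<sigma>" "\<And>\<beta>. coef \<alpha> \<sigma> j \<beta> \<noteq> 0 \<Longrightarrow> \<beta> \<in> \<sigma> \<and> j < \<beta>"
proof -
  obtain j where j: "j < N" "j \<notin> \<sigma>" and dep: "\<not> lin_indep (\<alpha> ` ({j} \<union> {i\<in>\<sigma>. i > j}))"
    using assms by (auto simp: Bset_def)
  let ?T = "{i\<in>\<sigma>. j < i}"
  have "V.independent (\<alpha> ` \<sigma>)"
    using \<sigma> by (simp add: calB_def lin_indep_def)
  then have "V.independent (\<alpha> ` ?T)"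
    by (rule V.independent_mono) auto
  moreover have "\<alpha> j \<notin> \<alpha> ` ?T"
    using inj j calB_subset[OF \<sigma>] by (auto simp: inj_on_def)
  ultimately have "\<alpha> j \<in> V.span (\<alpha> ` ?T)"
    using dep V.independent_insert[of "\<alpha> j" "\<alpha> ` ?T"] by (auto simp: lin_indep_def)
  then have "coef \<alpha> \<sigma> j \<beta> = 0" if "\<beta> \<notin> ?T" for \<beta>
    using coef_vanishes_outside_span[OF \<sigma> inj _ _ that] by auto
  then show thesis
    using that j by blast
qed

section \<open>Independence of the functions \<open>phi \<alpha> b\<close>, \<open>b \<in> Bset \<alpha> N\<close>\<close>

text \<open>The induction proving independence passes to hyperplanes of \<open>V*\<close>, so linear independence
  and the defining condition of \<open>B\<close> are taken for the restrictions of the \<open>\<alpha> i\<close> to a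
  subspace \<open>W\<close>.\<close>

definition lin_indep_on :: "('n \<Rightarrow> 'k) set \<Rightarrow> (nat \<Rightarrow> ('n::finite \<Rightarrow> 'k::field)) \<Rightarrow> nat set \<Rightarrow> bool" where
  "lin_indep_on W \<alpha> S \<longleftrightarrow> (\<forall>c. (\<forall>x\<in>W. pairing (lincomb \<alpha> S c) x = 0) \<longrightarrow> (\<forall>i\<in>S. c i = 0))"

definition nbc_on :: "('n \<Rightarrow> 'k) set \<Rightarrow> (nat \<Rightarrow> ('n::finite \<Rightarrow> 'k::field)) \<Rightarrow> nat \<Rightarrow> nat set \<Rightarrow> bool" where
  "nbc_on W \<alpha> N b \<longleftrightarrow>
     lin_indep_on W \<alpha> b \<and> (\<forall>j<N. j \<notin> b \<longrightarrow> lin_indep_on W \<alpha> (insert j {i\<in>b. j < i}))"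

definition regular_on :: "('n \<Rightarrow> 'k) set \<Rightarrow> (nat \<Rightarrow> ('n::finite \<Rightarrow> 'k::field)) \<Rightarrow> nat \<Rightarrow> ('n \<Rightarrow> 'k) set" where
  "regular_on W \<alpha> N = {x\<in>W. \<forall>i<N. pairing (\<alpha> i) x \<noteq> 0}"

text \<open>\<open>cleared_sum \<alpha> A c\<close> is \<open>(\<Prod>i\<in>A. \<alpha> i) * (\<Sum>b\<in>Pow A. c b * phi \<alpha> b)\<close> with
  the denominators cleared; unlike the sum itself it is meaningful where some \<open>\<alpha> i\<close> vanish.\<close>

definition cleared_sum ::
    "(nat \<Rightarrow> ('n::finite \<Rightarrow> 'k::field)) \<Rightarrow> nat set \<Rightarrow> (nat set \<Rightarrow> 'k) \<Rightarrow> ('n \<Rightarrow> 'k) \<Rightarrow> 'k" where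
  "cleared_sum \<alpha> A c x = (\<Sum>b\<in>Pow A. c b * (\<Prod>i\<in>A - b. pairing (\<alpha> i) x))"

lemma proportional_not_lin_indep_on:
  assumes "finite S" "j \<in> S" "m \<in> S" "j \<noteq> m"
    and ratio: "\<forall>x\<in>W. pairing (\<alpha> j) x = l * pairing (\<alpha> m) x"
  shows "\<not> lin_indep_on W \<alpha> S"
proof
  assume indep: "lin_indep_on W \<alpha> S"
  define c where "c i = (if i = j then 1 else if i = m then - l else 0)" for i
  have "pairing (lincomb \<alpha> S c) x
      = (\<Sum>i\<in>S. (if i = j then pairing (\<alpha> j) x else 0) + (if i = m then - l * pairing (\<alpha> m) x else 0))"
    for x
    unfolding pairing_lincomb by (rule sum.cong) (auto simp: c_def assms(4))
  then have "\<forall>x\<in>W. pairing (lincomb \<alpha> S c) x = 0"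
    using assms(1-3) ratio by (simp add: sum.distrib)
  then have "c j = 0"
    using indep assms(2) by (simp add: lin_indep_on_def)
  then show False
    by (simp add: c_def)
qed

lemma subspace_hyperplane: "V.subspace W \<Longrightarrow> V.subspace {x\<in>W. pairing u x = 0}"
  by (auto simp: V.subspace_def pairing_add pairing_vscale pairing_def[of u 0])

lemma proportional_on_hyperplane:
  assumes W: "V.subspace W" and v: "v \<in> W" "pairing u v \<noteq> 0"
    and vanish: "\<And>x. x \<in> W \<Longrightarrow> pairing u x = 0 \<Longrightarrow> pairing w x = 0" and x: "x \<in> W"
  shows "pairing w x = (pairing w v / pairing u v) * pairing u x"
proof -
  define t where "t = pairing u x / pairing u v"
  have "x - vscale t v \<in> W"
    using W x v(1) by (intro V.subspace_diff V.subspace_scale)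
  moreover have "pairing u (x - vscale t v) = 0"
    using v(2) by (simp add: pairing_diff pairing_vscale t_def)
  ultimately have "pairing w (x - vscale t v) = 0"
    by (rule vanish)
  then show ?thesis
    by (simp add: pairing_diff pairing_vscale t_def)
qed

lemma lin_indep_on_hyperplane:
  assumes W: "V.subspace W" and v: "v \<in> W" "pairing (\<alpha> m) v \<noteq> 0"
    and S: "finite S" "m \<notin> S" and indep: "lin_indep_on W \<alpha> (insert m S)"
  shows "lin_indep_on {x\<in>W. pairing (\<alpha> m) x = 0} \<alpha> S"
  unfolding lin_indep_on_def
proof (intro allI impI)
  fix c
  assume c: "\<forall>x\<in>{x\<in>W. pairing (\<alpha> m) x = 0}. pairing (lincomb \<alpha> S c) x = 0"
  define k where "k = pairing (lincomb \<alpha> S c) v / pairing (\<alpha> m) v"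
  have "pairing (lincomb \<alpha> (insert m S) (c(m := - k))) x = 0" if x: "x \<in> W" for x
  proof -
    have "(\<Sum>i\<in>S. (c(m := - k)) i * pairing (\<alpha> i) x) = pairing (lincomb \<alpha> S c) x"
      unfolding pairing_lincomb using S(2) by (intro sum.cong) auto
    also have "\<dots> = k * pairing (\<alpha> m) x"
      unfolding k_def by (rule proportional_on_hyperplane[OF W v _ x]) (use c in blast)
    finally show ?thesis
      using S by (simp add: pairing_lincomb)
  qed
  then have "(c(m := - k)) i = 0" if "i \<in> S" for i
    using indep that unfolding lin_indep_on_def by blast
  then show "\<forall>i\<in>S. c i = 0"
    using S(2) by (metis fun_upd_other)
qed

lemma nbc_on_Suc_imp: "nbc_on W \<alpha> (Suc m) b \<Longrightarrow> nbc_on W \<alpha> m b"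
  by (simp add: nbc_on_def)

lemma nbc_on_hyperplane:
  assumes W: "V.subspace W" and v: "v \<in> W" "pairing (\<alpha> m) v \<noteq> 0"
    and b: "finite b" "m \<notin> b" and nbc: "nbc_on W \<alpha> (Suc m) (insert m b)"
  shows "nbc_on {x\<in>W. pairing (\<alpha> m) x = 0} \<alpha> m b"
  unfolding nbc_on_def
proof (intro conjI allI impI)
  show "lin_indep_on {x\<in>W. pairing (\<alpha> m) x = 0} \<alpha> b"
    using W v b nbc by (intro lin_indep_on_hyperplane[of W v \<alpha> m]) (simp_all add: nbc_on_def)
  fix j
  assume j: "j < m" "j \<notin> b"
  have "insert j {i\<in>insert m b. j < i} = insert m (insert j {i\<in>b. j < i})"
    using j by auto
  then have "lin_indep_on W \<alpha> (insert m (insert j {i\<in>b. j < i}))"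
    using nbc j unfolding nbc_on_def by (metis insert_iff less_Suc_eq less_irrefl_nat)
  then show "lin_indep_on {x\<in>W. pairing (\<alpha> m) x = 0} \<alpha> (insert j {i\<in>b. j < i})"
    using W v b j by (intro lin_indep_on_hyperplane[of W v \<alpha> m]) auto
qed

lemma hyperplane_vanishing_not_nbc_on:
  assumes W: "V.subspace W" and v: "v \<in> W" "pairing (\<alpha> m) v \<noteq> 0"
    and j: "j < m" "\<forall>x\<in>{x\<in>W. pairing (\<alpha> m) x = 0}. pairing (\<alpha> j) x = 0"
    and b: "finite b" "m \<in> b"
  shows "\<not> nbc_on W \<alpha> (Suc m) b"
proof
  assume nbc: "nbc_on W \<alpha> (Suc m) b"
  define l where "l = pairing (\<alpha> j) v / pairing (\<alpha> m) v"
  have ratio: "\<forall>x\<in>W. pairing (\<alpha> j) x = l * pairing (\<alpha> m) x"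
  proof
    fix x
    assume "x \<in> W"
    show "pairing (\<alpha> j) x = l * pairing (\<alpha> m) x"
      unfolding l_def by (rule proportional_on_hyperplane[OF W v _ \<open>x \<in> W\<close>]) (use j(2) in simp)
  qed
  show False
  proof (cases "j \<in> b")
    case True
    then have "\<not> lin_indep_on W \<alpha> b"
      using j(1) b ratio by (intro proportional_not_lin_indep_on[where l = l]) auto
    then show False
      using nbc by (simp add: nbc_on_def)
  next
    case False
    then have "\<not> lin_indep_on W \<alpha> (insert j {i\<in>b. j < i})"
      using j(1) b ratio by (intro proportional_not_lin_indep_on[where m = m and l = l]) auto
    then show False
      using nbc False j(1) by (simp add: nbc_on_def)
  qed
qed

lemma finite_zeros_on_line:
  assumes "pairing u x \<noteq> 0 \<or> pairing u v \<noteq> 0"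
  shows "finite {t. pairing u (x + vscale t v) = 0}"
proof (cases "pairing u v = 0")
  case True
  then show ?thesis
    using assms by (simp add: pairing_add pairing_vscale)
next
  case False
  then have "{t. pairing u (x + vscale t v) = 0} \<subseteq> {- pairing u x / pairing u v}"
    by (auto simp: pairing_add pairing_vscale field_simps add_eq_0_iff)
  then show ?thesis
    by (rule finite_subset) simp
qed

lemma exists_regular_point:
  fixes \<alpha> :: "nat \<Rightarrow> ('n::finite \<Rightarrow> 'k::field)"
  assumes inf: "infinite (UNIV :: 'k set)" and W: "V.subspace W" and "finite I"
    and "\<And>i. i \<in> I \<Longrightarrow> \<exists>x\<in>W. pairing (\<alpha> i) x \<noteq> 0"
  shows "\<exists>v\<in>W. \<forall>i\<in>I. pairing (\<alpha> i) v \<noteq> 0"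
  using assms(3,4)
proof (induction I rule: finite_induct)
  case empty
  then show ?case
    using W V.subspace_0 by blast
next
  case (insert j I)
  obtain v where v: "v \<in> W" "\<forall>i\<in>I. pairing (\<alpha> i) v \<noteq> 0"
    using insert by blast
  obtain w where w: "w \<in> W" "pairing (\<alpha> j) w \<noteq> 0"
    using insert.prems by blast
  have "finite (\<Union>i\<in>insert j I. {t. pairing (\<alpha> i) (v + vscale t w) = 0})"
    using insert.hyps(1) v(2) w(2) by (auto intro!: finite_zeros_on_line)
  then obtain t where "t \<notin> (\<Union>i\<in>insert j I. {t. pairing (\<alpha> i) (v + vscale t w) = 0})"
    using inf ex_new_if_finite by blast
  moreover have "v + vscale t w \<in> W"
    using W v(1) w(1) by (intro V.subspace_add V.subspace_scale)
  ultimately show ?case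
    by blast
qed

lemma cleared_sum_eq:
  assumes "finite A" "\<forall>i\<in>A. pairing (\<alpha> i) x \<noteq> 0"
  shows "cleared_sum \<alpha> A c x = (\<Prod>i\<in>A. pairing (\<alpha> i) x) * (\<Sum>b\<in>Pow A. c b * phi \<alpha> b x)"
proof -
  have "(\<Prod>i\<in>A. pairing (\<alpha> i) x) * phi \<alpha> b x = (\<Prod>i\<in>A - b. pairing (\<alpha> i) x)" if "b \<subseteq> A" for b
  proof -
    have "(\<Prod>i\<in>A. pairing (\<alpha> i) x) = (\<Prod>i\<in>A - b. pairing (\<alpha> i) x) * (\<Prod>i\<in>b. pairing (\<alpha> i) x)"
      using assms(1) that by (simp add: prod.subset_diff)
    moreover have "finite b"
      using assms(1) that by (rule finite_subset[rotated])
    then have "(\<Prod>i\<in>b. pairing (\<alpha> i) x) \<noteq> 0"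
      using assms(2) that by (auto simp: prod_zero_iff)
    ultimately show ?thesis
      by (simp add: phi_def)
  qed
  then show ?thesis
    by (simp add: cleared_sum_def sum_distrib_left mult.left_commute)
qed

lemma phi_sum_eq_0_if_cleared:
  assumes "finite A" "\<forall>i\<in>A. pairing (\<alpha> i) x \<noteq> 0" "cleared_sum \<alpha> A c x = 0"
  shows "(\<Sum>b\<in>Pow A. c b * phi \<alpha> b x) = 0"
  using assms by (simp add: cleared_sum_eq prod_zero_iff)

lemma sum_Pow_lessThan_Suc:
  "(\<Sum>b\<in>Pow {..<Suc m}. g b) = (\<Sum>b\<in>Pow {..<m}. g b) + (\<Sum>b\<in>Pow {..<m}. g (insert m b))"
proof -
  have "inj_on (insert m) (Pow {..<m})"
    by (auto simp: inj_on_def)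
  moreover have "Pow {..<m} \<inter> insert m ` Pow {..<m} = {}"
    by auto
  ultimately show ?thesis
    by (simp add: lessThan_Suc Pow_insert sum.union_disjoint sum.reindex)
qed

lemma cleared_sum_Suc:
  "cleared_sum \<alpha> {..<Suc m} c x
     = pairing (\<alpha> m) x * cleared_sum \<alpha> {..<m} c x + cleared_sum \<alpha> {..<m} (\<lambda>b. c (insert m b)) x"
proof -
  have "(\<Sum>b\<in>Pow {..<m}. c b * (\<Prod>i\<in>{..<Suc m} - b. pairing (\<alpha> i) x))
      = pairing (\<alpha> m) x * cleared_sum \<alpha> {..<m} c x"
    unfolding cleared_sum_def sum_distrib_left
  proof (rule sum.cong)
    fix b
    assume "b \<in> Pow {..<m}"
    then have "{..<Suc m} - b = insert m ({..<m} - b)"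
      by auto
    then show "c b * (\<Prod>i\<in>{..<Suc m} - b. pairing (\<alpha> i) x)
        = pairing (\<alpha> m) x * (c b * (\<Prod>i\<in>{..<m} - b. pairing (\<alpha> i) x))"
      by (simp add: mult.left_commute)
  qed simp
  moreover have "{..<Suc m} - insert m b = {..<m} - b" for b
    by auto
  ultimately show ?thesis
    by (simp add: cleared_sum_def sum_Pow_lessThan_Suc)
qed

text \<open>Along the line \<open>x + t v\<close> through a point \<open>v\<close> regular for all \<open>\<alpha> i\<close>, the cleared sum
  is a polynomial in \<open>t\<close> vanishing for all but finitely many \<open>t\<close>.\<close>

lemma cleared_sum_vanishes:
  fixes \<alpha> :: "nat \<Rightarrow> ('n::finite \<Rightarrow> 'k::field)"
  assumes inf: "infinite (UNIV :: 'k set)" and W: "V.subspace W" and A: "A \<subseteq> {..<N}"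
    and nz: "\<And>i. i < N \<Longrightarrow> \<exists>x\<in>W. pairing (\<alpha> i) x \<noteq> 0"
    and vanish: "\<And>x. x \<in> regular_on W \<alpha> N \<Longrightarrow> (\<Sum>b\<in>Pow A. c b * phi \<alpha> b x) = 0"
    and x: "x \<in> W"
  shows "cleared_sum \<alpha> A c x = 0"
proof -
  obtain v where v: "v \<in> W" "\<forall>i<N. pairing (\<alpha> i) v \<noteq> 0"
    using exists_regular_point[OF inf W, of "{..<N}" \<alpha>] nz by auto
  define q where "q = (\<Sum>b\<in>Pow A. smult (c b) (\<Prod>i\<in>A - b. [:pairing (\<alpha> i) x, pairing (\<alpha> i) v:]))"
  have q: "poly q t = cleared_sum \<alpha> A c (x + vscale t v)" for t
    by (simp add: q_def cleared_sum_def poly_sum poly_prod pairing_add pairing_vscale)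
  define Z where "Z = (\<Union>i<N. {t. pairing (\<alpha> i) (x + vscale t v) = 0})"
  have "finite Z"
    using v(2) by (auto simp: Z_def intro!: finite_zeros_on_line)
  have "poly q t = 0" if "t \<notin> Z" for t
  proof -
    have reg: "x + vscale t v \<in> regular_on W \<alpha> N"
      using that W x v(1) by (auto simp: Z_def regular_on_def intro: V.subspace_add V.subspace_scale)
    then have "\<forall>i\<in>A. pairing (\<alpha> i) (x + vscale t v) \<noteq> 0"
      using A by (auto simp: regular_on_def)
    moreover have "finite A"
      using A by (meson finite_lessThan finite_subset)
    ultimately show ?thesis
      using vanish[OF reg] by (simp add: q cleared_sum_eq)
  qed
  then have "UNIV - Z \<subseteq> {t. poly q t = 0}"
    by auto
  then have "infinite {t. poly q t = 0}"
    using inf \<open>finite Z\<close> Diff_infinite_finite infinite_super by blast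
  then have "q = 0"
    using poly_roots_finite by blast
  then show ?thesis
    using q[of 0] by simp
qed

text \<open>On \<open>\<alpha> m = 0\<close> only the terms of the sets containing \<open>m\<close> survive in the cleared sum.\<close>

lemma phi_sum_restrict_hyperplane:
  fixes \<alpha> :: "nat \<Rightarrow> ('n::finite \<Rightarrow> 'k::field)"
  assumes inf: "infinite (UNIV :: 'k set)" and W: "V.subspace W"
    and nz: "\<And>i. i < Suc m \<Longrightarrow> \<exists>x\<in>W. pairing (\<alpha> i) x \<noteq> 0"
    and vanish: "\<And>x. x \<in> regular_on W \<alpha> (Suc m) \<Longrightarrow> (\<Sum>b\<in>Pow {..<Suc m}. c b * phi \<alpha> b x) = 0"
    and x: "x \<in> regular_on {x\<in>W. pairing (\<alpha> m) x = 0} \<alpha> m"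
  shows "(\<Sum>b\<in>Pow {..<m}. c (insert m b) * phi \<alpha> b x) = 0"
proof (rule phi_sum_eq_0_if_cleared)
  have "cleared_sum \<alpha> {..<Suc m} c x = 0"
    using x by (intro cleared_sum_vanishes[OF inf W _ nz vanish]) (auto simp: regular_on_def)
  then show "cleared_sum \<alpha> {..<m} (\<lambda>b. c (insert m b)) x = 0"
    using x by (simp add: cleared_sum_Suc regular_on_def)
qed (use x in \<open>auto simp: regular_on_def\<close>)

lemma phi_sum_vanishes_across_hyperplane:
  fixes \<alpha> :: "nat \<Rightarrow> ('n::finite \<Rightarrow> 'k::field)"
  assumes inf: "infinite (UNIV :: 'k set)" and W: "V.subspace W"
    and nz: "\<And>i. i < Suc m \<Longrightarrow> \<exists>x\<in>W. pairing (\<alpha> i) x \<noteq> 0"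
    and vanish: "\<And>x. x \<in> regular_on W \<alpha> (Suc m) \<Longrightarrow> (\<Sum>b\<in>Pow {..<m}. c b * phi \<alpha> b x) = 0"
    and x: "x \<in> regular_on W \<alpha> m"
  shows "(\<Sum>b\<in>Pow {..<m}. c b * phi \<alpha> b x) = 0"
proof (rule phi_sum_eq_0_if_cleared)
  show "cleared_sum \<alpha> {..<m} c x = 0"
    using x by (intro cleared_sum_vanishes[OF inf W _ nz vanish]) (auto simp: regular_on_def)
qed (use x in \<open>auto simp: regular_on_def\<close>)

lemma nbc_phi_independent:
  fixes \<alpha> :: "nat \<Rightarrow> ('n::finite \<Rightarrow> 'k::field)"
  assumes inf: "infinite (UNIV :: 'k set)"
  shows "V.subspace W \<Longrightarrow> (\<And>i. i < N \<Longrightarrow> \<exists>x\<in>W. pairing (\<alpha> i) x \<noteq> 0)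
    \<Longrightarrow> (\<And>b. b \<subseteq> {..<N} \<Longrightarrow> \<not> nbc_on W \<alpha> N b \<Longrightarrow> c b = 0)
    \<Longrightarrow> (\<And>x. x \<in> regular_on W \<alpha> N \<Longrightarrow> (\<Sum>b\<in>Pow {..<N}. c b * phi \<alpha> b x) = 0)
    \<Longrightarrow> b \<subseteq> {..<N} \<Longrightarrow> c b = 0"
proof (induction N arbitrary: W c b)
  case 0
  have "0 \<in> regular_on W \<alpha> 0"
    using 0 V.subspace_0 by (simp add: regular_on_def)
  then have "c {} = 0"
    using "0.prems"(4) by (simp add: phi_def)
  then show ?case
    using "0.prems"(5) by simp
next
  case (Suc m)
  note W = Suc.prems(1) and nz = Suc.prems(2) and supp = Suc.prems(3) and vanish = Suc.prems(4)
  obtain v where v: "v \<in> W" "pairing (\<alpha> m) v \<noteq> 0"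
    using nz by blast
  define H where "H = {x\<in>W. pairing (\<alpha> m) x = 0}"
  have with_m: "c (insert m b) = 0" if b: "b \<subseteq> {..<m}" for b
  proof (cases "\<exists>j<m. \<forall>x\<in>H. pairing (\<alpha> j) x = 0")
    case True
    then obtain j where "j < m" "\<forall>x\<in>H. pairing (\<alpha> j) x = 0"
      by blast
    then have "\<not> nbc_on W \<alpha> (Suc m) (insert m b)"
      using W v b by (intro hyperplane_vanishing_not_nbc_on[of W v \<alpha> m j])
        (auto simp: H_def intro: finite_subset)
    then show ?thesis
      by (rule supp[rotated]) (use b in auto)
  next
    case False
    show ?thesis
    proof (rule Suc.IH[of H "\<lambda>b. c (insert m b)"])
      show "V.subspace H"
        unfolding H_def by (rule subspace_hyperplane[OF W])
      show "\<exists>x\<in>H. pairing (\<alpha> i) x \<noteq> 0" if "i < m" for i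
        using False that by blast
      show "c (insert m b') = 0" if "b' \<subseteq> {..<m}" "\<not> nbc_on H \<alpha> m b'" for b'
      proof (rule supp)
        have "finite b'" "m \<notin> b'"
          using that(1) finite_subset by auto
        then show "\<not> nbc_on W \<alpha> (Suc m) (insert m b')"
          using nbc_on_hyperplane[of W v \<alpha> m b'] W v that(2) by (auto simp: H_def)
      qed (use that in auto)
      show "(\<Sum>b\<in>Pow {..<m}. c (insert m b) * phi \<alpha> b x) = 0" if "x \<in> regular_on H \<alpha> m" for x
        using phi_sum_restrict_hyperplane[OF inf W nz vanish] that by (simp add: H_def)
    qed (rule b)
  qed
  have without_m: "c b = 0" if b: "b \<subseteq> {..<m}" for b
  proof (rule Suc.IH[of W c])
    show "c b' = 0" if "b' \<subseteq> {..<m}" "\<not> nbc_on W \<alpha> m b'" for b'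
      using that by (intro supp) (auto dest: nbc_on_Suc_imp)
    have "(\<Sum>b\<in>Pow {..<m}. c b * phi \<alpha> b x) = 0" if "x \<in> regular_on W \<alpha> (Suc m)" for x
      using vanish[OF that] with_m by (simp add: sum_Pow_lessThan_Suc)
    from phi_sum_vanishes_across_hyperplane[OF inf W nz this]
    show "(\<Sum>b\<in>Pow {..<m}. c b * phi \<alpha> b x) = 0" if "x \<in> regular_on W \<alpha> m" for x
      using that by blast
  qed (use W nz b in auto)
  show ?case
  proof (cases "m \<in> b")
    case True
    then have "b = insert m (b - {m})" "b - {m} \<subseteq> {..<m}"
      using Suc.prems(5) by auto
    then show ?thesis
      using with_m by metis
  next
    case False
    then have "b \<subseteq> {..<m}"
      using Suc.prems(5) by (auto simp: less_Suc_eq)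
    then show ?thesis
      by (rule without_m)
  qed
qed

lemma lin_indep_imp_lin_indep_on_UNIV:
  assumes "lin_indep (\<alpha> ` S)" "finite S" "inj_on \<alpha> S"
  shows "lin_indep_on UNIV \<alpha> S"
  using lin_indep_image_lincomb_eq_0[OF assms] by (simp add: lin_indep_on_def pairing_eq_0_iff)

lemma Bset_nbc_on_UNIV:
  assumes inj: "inj_on \<alpha> {..<N}" and b: "b \<in> Bset \<alpha> N"
  shows "nbc_on UNIV \<alpha> N b"
  unfolding nbc_on_def
proof (intro conjI allI impI)
  have sub: "b \<subseteq> {..<N}"
    using b by (simp add: Bset_def calB_def)
  then have fin: "finite b"
    by (meson finite_lessThan finite_subset)
  show "lin_indep_on UNIV \<alpha> b"
    using b fin inj_on_subset[OF inj sub]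
    by (intro lin_indep_imp_lin_indep_on_UNIV) (simp_all add: Bset_def calB_def)
  fix j
  assume j: "j < N" "j \<notin> b"
  have "insert j {i\<in>b. j < i} = {j} \<union> {i\<in>b. i > j}"
    by auto
  then have indep: "lin_indep (\<alpha> ` insert j {i\<in>b. j < i})"
    using b j by (simp only:) (simp add: Bset_def)
  have "insert j {i\<in>b. j < i} \<subseteq> {..<N}"
    using sub j by auto
  then show "lin_indep_on UNIV \<alpha> (insert j {i\<in>b. j < i})"
    by (intro lin_indep_imp_lin_indep_on_UNIV[OF indep] inj_on_subset[OF inj]) (use fin in auto)
qed

lemma Bset_phi_independent:
  fixes \<alpha> :: "nat \<Rightarrow> ('n::finite \<Rightarrow> 'k::field)"
  assumes inf: "infinite (UNIV :: 'k set)" and inj: "inj_on \<alpha> {..<N}"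
    and nonzero: "\<And>i. i < N \<Longrightarrow> \<alpha> i \<noteq> 0"
    and vanish: "\<forall>x\<in>regular_set \<alpha> N. (\<Sum>b\<in>Bset \<alpha> N. c b * phi \<alpha> b x) = 0"
    and b: "b \<in> Bset \<alpha> N"
  shows "c b = 0"
proof -
  define c' where "c' b = (if b \<in> Bset \<alpha> N then c b else 0)" for b
  have Bset_Pow: "Bset \<alpha> N \<subseteq> Pow {..<N}"
    by (auto simp: Bset_def calB_def)
  have "c' b = 0"
  proof (rule nbc_phi_independent[OF inf V.subspace_UNIV])
    show "\<exists>x\<in>UNIV. pairing (\<alpha> i) x \<noteq> 0" if "i < N" for i
      using nonzero[OF that] pairing_eq_0_iff by blast
    show "c' b' = 0" if "\<not> nbc_on UNIV \<alpha> N b'" for b'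
      using that Bset_nbc_on_UNIV[OF inj] by (auto simp: c'_def)
    show "(\<Sum>b\<in>Pow {..<N}. c' b * phi \<alpha> b x) = 0" if "x \<in> regular_on UNIV \<alpha> N" for x
    proof -
      have "(\<Sum>b\<in>Pow {..<N}. c' b * phi \<alpha> b x) = (\<Sum>b\<in>Bset \<alpha> N. c b * phi \<alpha> b x)"
        using Bset_Pow by (intro sum.mono_neutral_cong_right) (auto simp: c'_def)
      then show ?thesis
        using vanish that by (simp add: regular_on_def regular_set_def)
    qed
  qed (use b Bset_Pow in auto)
  then show ?thesis
    using b by (simp add: c'_def)
qed

section \<open>Orlik-Solomon relations and straightening\<close>

definition bracket :: "nat set \<Rightarrow> nat set \<Rightarrow> 'k::zero_neq_one" where
  "bracket \<sigma> = (\<lambda>\<tau>. if \<tau> = \<sigma> then 1 else 0)"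

definition supported_on :: "nat set set \<Rightarrow> (nat set \<Rightarrow> 'k::zero) set" where
  "supported_on A = {c. \<forall>\<tau>. \<tau> \<notin> A \<longrightarrow> c \<tau> = 0}"

definition os_relations :: "(nat \<Rightarrow> ('n::finite \<Rightarrow> 'k::field)) \<Rightarrow> nat \<Rightarrow> (nat set \<Rightarrow> 'k) set" where
  "os_relations \<alpha> N = {os_rel \<alpha> \<sigma> a | \<sigma> a. \<sigma> \<in> calB \<alpha> N \<and> a < N \<and> a \<notin> \<sigma>}"

definition phi_relations :: "(nat \<Rightarrow> ('n::finite \<Rightarrow> 'k::field)) \<Rightarrow> nat \<Rightarrow> (nat set \<Rightarrow> 'k) set" where
  "phi_relations \<alpha> N = {c \<in> supported_on (calB \<alpha> N).
     \<forall>x\<in>regular_set \<alpha> N. (\<Sum>\<sigma>\<in>calB \<alpha> N. c \<sigma> * phi \<alpha> \<sigma> x) = 0}"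

lemma sum_bracket:
  fixes f :: "nat set \<Rightarrow> 'k::semiring_1"
  assumes "finite A"
  shows "(\<Sum>\<tau>\<in>A. bracket \<sigma> \<tau> * f \<tau>) = (if \<sigma> \<in> A then f \<sigma> else 0)"
proof -
  have "(\<Sum>\<tau>\<in>A. bracket \<sigma> \<tau> * f \<tau>) = (\<Sum>\<tau>\<in>A. if \<tau> = \<sigma> then f \<tau> else 0)"
    by (rule sum.cong) (simp_all add: bracket_def)
  then show ?thesis
    using assms by (simp add: sum.delta)
qed

lemma sum_scale_bracket:
  fixes f :: "nat set \<Rightarrow> 'k::semiring_1"
  assumes "finite A"
  shows "(\<Sum>\<sigma>\<in>A. f \<sigma> * bracket \<sigma> \<tau>) = (if \<tau> \<in> A then f \<tau> else 0)"
proof -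
  have "(\<Sum>\<sigma>\<in>A. f \<sigma> * bracket \<sigma> \<tau>) = (\<Sum>\<sigma>\<in>A. if \<tau> = \<sigma> then f \<sigma> else 0)"
    by (rule sum.cong) (simp_all add: bracket_def)
  then show ?thesis
    using assms by (simp add: sum.delta')
qed

lemma subspace_supported_on: "Free.subspace (supported_on A)"
  by (auto simp: Free.subspace_def supported_on_def fscale_def)

lemma subspace_phi_relations: "Free.subspace (phi_relations \<alpha> N)"
  by (auto simp: Free.subspace_def phi_relations_def supported_on_def fscale_def
      distrib_right sum.distrib mult.assoc simp flip: sum_distrib_left)

lemma os_rel_eq_bracket:
  "os_rel \<alpha> \<sigma> a = bracket \<sigma> - (\<Sum>\<beta>\<in>\<sigma>. fscale (coef \<alpha> \<sigma> a \<beta>) (bracket (insert a (\<sigma> - {\<beta>}))))"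
  by (auto simp: os_rel_def bracket_def fscale_def fun_eq_iff sum_fun_apply intro!: sum.cong)

lemma phi_partial_fractions:
  assumes "finite \<sigma>" "a \<notin> \<sigma>" "\<forall>i\<in>insert a \<sigma>. pairing (\<alpha> i) x \<noteq> 0"
    and "pairing (\<alpha> a) x = (\<Sum>\<beta>\<in>\<sigma>. C \<beta> * pairing (\<alpha> \<beta>) x)"
  shows "(\<Sum>\<beta>\<in>\<sigma>. C \<beta> * phi \<alpha> (insert a (\<sigma> - {\<beta>})) x) = phi \<alpha> \<sigma> x"
proof -
  define P where "P = (\<Prod>i\<in>\<sigma>. pairing (\<alpha> i) x)"
  have P: "P \<noteq> 0"
    using assms(1,3) by (simp add: P_def)
  have "phi \<alpha> (insert a (\<sigma> - {\<beta>})) x = pairing (\<alpha> \<beta>) x / (pairing (\<alpha> a) x * P)"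
    if "\<beta> \<in> \<sigma>" for \<beta>
    using assms(1-3) that by (simp add: phi_def P_def prod.remove[of \<sigma> \<beta>])
  then have "(\<Sum>\<beta>\<in>\<sigma>. C \<beta> * phi \<alpha> (insert a (\<sigma> - {\<beta>})) x)
      = (\<Sum>\<beta>\<in>\<sigma>. C \<beta> * pairing (\<alpha> \<beta>) x) / (pairing (\<alpha> a) x * P)"
    by (simp add: sum_divide_distrib)
  also have "\<dots> = phi \<alpha> \<sigma> x"
    using assms(3,4) P by (simp add: phi_def P_def)
  finally show ?thesis .
qed

lemma os_rel_apply:
  "os_rel \<alpha> \<sigma> a \<tau> = bracket \<sigma> \<tau> - (\<Sum>\<beta>\<in>\<sigma>. coef \<alpha> \<sigma> a \<beta> * bracket (insert a (\<sigma> - {\<beta>})) \<tau>)"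
  by (simp add: os_rel_eq_bracket fscale_def sum_fun_apply)

lemma os_rel_supported_on_calB:
  assumes \<sigma>: "\<sigma> \<in> calB \<alpha> N" and inj: "inj_on \<alpha> {..<N}" and a: "a < N" "a \<notin> \<sigma>"
  shows "os_rel \<alpha> \<sigma> a \<in> supported_on (calB \<alpha> N)"
  unfolding supported_on_def
proof (intro CollectI allI impI)
  fix \<tau>
  assume \<tau>: "\<tau> \<notin> calB \<alpha> N"
  have "(\<Sum>\<beta>\<in>\<sigma>. coef \<alpha> \<sigma> a \<beta> * bracket (insert a (\<sigma> - {\<beta>})) \<tau>) = 0"
  proof (rule sum.neutral, rule ballI)
    fix \<beta>
    assume "\<beta> \<in> \<sigma>"
    show "coef \<alpha> \<sigma> a \<beta> * bracket (insert a (\<sigma> - {\<beta>})) \<tau> = 0"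
      using exchange_calB[OF \<sigma> inj a \<open>\<beta> \<in> \<sigma>\<close>] \<tau>
      by (cases "coef \<alpha> \<sigma> a \<beta> = 0") (auto simp: bracket_def)
  qed
  moreover have "bracket \<sigma> \<tau> = 0"
    using \<sigma> \<tau> by (auto simp: bracket_def)
  ultimately show "os_rel \<alpha> \<sigma> a \<tau> = 0"
    by (simp add: os_rel_apply)
qed

lemma sum_os_rel_phi:
  assumes \<sigma>: "\<sigma> \<in> calB \<alpha> N" and inj: "inj_on \<alpha> {..<N}" and a: "a < N" "a \<notin> \<sigma>"
    and x: "x \<in> regular_set \<alpha> N"
  shows "(\<Sum>\<tau>\<in>calB \<alpha> N. os_rel \<alpha> \<sigma> a \<tau> * phi \<alpha> \<tau> x) = 0"
proof -
  define C where "C = coef \<alpha> \<sigma> a"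
  define s where "s \<beta> = insert a (\<sigma> - {\<beta>})" for \<beta>
  have "(\<Sum>\<tau>\<in>calB \<alpha> N. os_rel \<alpha> \<sigma> a \<tau> * phi \<alpha> \<tau> x)
      = (\<Sum>\<tau>\<in>calB \<alpha> N. bracket \<sigma> \<tau> * phi \<alpha> \<tau> x)
        - (\<Sum>\<beta>\<in>\<sigma>. C \<beta> * (\<Sum>\<tau>\<in>calB \<alpha> N. bracket (s \<beta>) \<tau> * phi \<alpha> \<tau> x))"
    by (simp add: os_rel_apply C_def s_def left_diff_distrib sum_subtractf sum_distrib_left
        sum_distrib_right mult.assoc sum.swap[of _ "calB \<alpha> N"])
  also have "(\<Sum>\<tau>\<in>calB \<alpha> N. bracket \<sigma> \<tau> * phi \<alpha> \<tau> x) = phi \<alpha> \<sigma> x"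
    using \<sigma> by (simp add: sum_bracket finite_calB)
  also have "(\<Sum>\<beta>\<in>\<sigma>. C \<beta> * (\<Sum>\<tau>\<in>calB \<alpha> N. bracket (s \<beta>) \<tau> * phi \<alpha> \<tau> x))
      = (\<Sum>\<beta>\<in>\<sigma>. C \<beta> * phi \<alpha> (s \<beta>) x)"
    using exchange_calB[OF \<sigma> inj a] by (intro sum.cong) (auto simp: sum_bracket finite_calB C_def s_def)
  also have "\<dots> = phi \<alpha> \<sigma> x"
    unfolding s_def
  proof (rule phi_partial_fractions)
    show "\<forall>i\<in>insert a \<sigma>. pairing (\<alpha> i) x \<noteq> 0"
      using x a calB_subset[OF \<sigma>] by (auto simp: regular_set_def)
    show "pairing (\<alpha> a) x = (\<Sum>\<beta>\<in>\<sigma>. C \<beta> * pairing (\<alpha> \<beta>) x)"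
      using coef_lincomb[OF \<sigma> inj, of a] by (simp add: C_def flip: pairing_lincomb)
  qed (use \<sigma> calB_finite a in auto)
  finally show ?thesis
    by simp
qed

lemma span_os_relations_subset: "inj_on \<alpha> {..<N} \<Longrightarrow> Free.span (os_relations \<alpha> N) \<subseteq> phi_relations \<alpha> N"
  by (intro Free.span_minimal subspace_phi_relations)
    (auto simp: os_relations_def phi_relations_def os_rel_supported_on_calB sum_os_rel_phi)

text \<open>Straightening, by induction on the index sum: \<open>os_rel \<alpha> \<sigma> j\<close> trades \<open>\<sigma>\<close> for
  the bases \<open>insert j (\<sigma> - {\<beta>})\<close> with \<open>\<beta> > j\<close>.\<close>

lemma bracket_in_span_os_relations_Bset:
  assumes inj: "inj_on \<alpha> {..<N}"
  shows "\<sigma> \<in> calB \<alpha> N \<Longrightarrow> bracket \<sigma> \<in> Free.span (os_relations \<alpha> N \<union> bracket ` Bset \<alpha> N)"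
proof (induction "\<Sum>\<sigma>" arbitrary: \<sigma> rule: less_induct)
  case less
  let ?S = "Free.span (os_relations \<alpha> N \<union> bracket ` Bset \<alpha> N)"
  show ?case
  proof (cases "\<sigma> \<in> Bset \<alpha> N")
    case True
    then show ?thesis
      by (intro Free.span_base) auto
  next
    case False
    then obtain j where j: "j < N" "j \<notin> \<sigma>"
      and later: "\<And>\<beta>. coef \<alpha> \<sigma> j \<beta> \<noteq> 0 \<Longrightarrow> \<beta> \<in> \<sigma> \<and> j < \<beta>"
      using not_Bset_obtain_index[OF less.prems inj] by blast
    have "fscale (coef \<alpha> \<sigma> j \<beta>) (bracket (insert j (\<sigma> - {\<beta>}))) \<in> ?S" if "\<beta> \<in> \<sigma>" for \<beta>
    proof (cases "coef \<alpha> \<sigma> j \<beta> = 0")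
      case True
      then show ?thesis
        using Free.span_zero by simp
    next
      case False
      have "\<Sum>(insert j (\<sigma> - {\<beta>})) < \<Sum>\<sigma>"
        using calB_finite[OF less.prems] j(2) later[OF False] that by (simp add: sum.remove)
      moreover have "insert j (\<sigma> - {\<beta>}) \<in> calB \<alpha> N"
        using exchange_calB[OF less.prems inj j that False] .
      ultimately show ?thesis
        by (intro Free.span_scale less.hyps)
    qed
    moreover have "os_rel \<alpha> \<sigma> j \<in> ?S"
      using less.prems j by (intro Free.span_base) (auto simp: os_relations_def)
    ultimately have "os_rel \<alpha> \<sigma> j
        + (\<Sum>\<beta>\<in>\<sigma>. fscale (coef \<alpha> \<sigma> j \<beta>) (bracket (insert j (\<sigma> - {\<beta>})))) \<in> ?S"
      by (intro Free.span_add Free.span_sum) auto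
    then show ?thesis
      by (simp add: os_rel_eq_bracket)
  qed
qed

lemma supported_calB_decompose:
  assumes inj: "inj_on \<alpha> {..<N}" and c: "c \<in> supported_on (calB \<alpha> N)"
  obtains r where "r \<in> Free.span (os_relations \<alpha> N)" "c - r \<in> supported_on (Bset \<alpha> N)"
proof -
  have "c = (\<Sum>\<sigma>\<in>calB \<alpha> N. fscale (c \<sigma>) (bracket \<sigma>))"
    using c by (auto simp: fun_eq_iff sum_fun_apply fscale_def sum_scale_bracket[OF finite_calB]
        supported_on_def)
  also have "\<dots> \<in> Free.span (os_relations \<alpha> N \<union> bracket ` Bset \<alpha> N)"
    using bracket_in_span_os_relations_Bset[OF inj] by (intro Free.span_sum Free.span_scale)
  finally obtain r d where "c = r + d" "r \<in> Free.span (os_relations \<alpha> N)"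
    and d: "d \<in> Free.span (bracket ` Bset \<alpha> N)"
    by (auto simp: Free.span_Un)
  moreover have "Free.span (bracket ` Bset \<alpha> N) \<subseteq> supported_on (Bset \<alpha> N)"
    by (intro Free.span_minimal subspace_supported_on) (auto simp: supported_on_def bracket_def)
  ultimately show thesis
    using that by auto
qed

lemma Bset_subset_calB: "Bset \<alpha> N \<subseteq> calB \<alpha> N"
  by (auto simp: Bset_def)

lemma sum_calB_supported_on_Bset:
  fixes f :: "nat set \<Rightarrow> 'k::field"
  assumes "d \<in> supported_on (Bset \<alpha> N)"
  shows "(\<Sum>\<tau>\<in>calB \<alpha> N. d \<tau> * f \<tau>) = (\<Sum>b\<in>Bset \<alpha> N. d b * f b)"
  using assms Bset_subset_calB
  by (intro sum.mono_neutral_right finite_calB) (auto simp: supported_on_def)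

lemma phi_relations_supported_on_Bset_eq_0:
  fixes \<alpha> :: "nat \<Rightarrow> ('n::finite \<Rightarrow> 'k::field)"
  assumes inf: "infinite (UNIV :: 'k set)" and inj: "inj_on \<alpha> {..<N}"
    and nonzero: "\<And>i. i < N \<Longrightarrow> \<alpha> i \<noteq> 0"
    and c: "c \<in> phi_relations \<alpha> N" "c \<in> supported_on (Bset \<alpha> N)"
  shows "c = 0"
proof
  fix b
  have "\<forall>x\<in>regular_set \<alpha> N. (\<Sum>b\<in>Bset \<alpha> N. c b * phi \<alpha> b x) = 0"
    using c by (simp add: phi_relations_def sum_calB_supported_on_Bset)
  then show "c b = 0 b"
    using Bset_phi_independent[OF inf inj nonzero] c(2)
    by (cases "b \<in> Bset \<alpha> N") (auto simp: supported_on_def)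
qed

lemma phi_relations_eq_span_os_relations:
  fixes \<alpha> :: "nat \<Rightarrow> ('n::finite \<Rightarrow> 'k::field)"
  assumes inf: "infinite (UNIV :: 'k set)" and inj: "inj_on \<alpha> {..<N}"
    and nonzero: "\<And>i. i < N \<Longrightarrow> \<alpha> i \<noteq> 0"
  shows "phi_relations \<alpha> N = Free.span (os_relations \<alpha> N)"
proof
  show "Free.span (os_relations \<alpha> N) \<subseteq> phi_relations \<alpha> N"
    using inj by (rule span_os_relations_subset)
  show "phi_relations \<alpha> N \<subseteq> Free.span (os_relations \<alpha> N)"
  proof
    fix c
    assume c: "c \<in> phi_relations \<alpha> N"
    then obtain r where r: "r \<in> Free.span (os_relations \<alpha> N)" "c - r \<in> supported_on (Bset \<alpha> N)"
      using supported_calB_decompose[OF inj] by (auto simp: phi_relations_def)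
    have "c - r \<in> phi_relations \<alpha> N"
      using c r(1) span_os_relations_subset[OF inj] Free.subspace_diff[OF subspace_phi_relations]
      by blast
    then have "c - r = 0"
      using phi_relations_supported_on_Bset_eq_0[OF inf inj nonzero _ r(2)] by blast
    then show "c \<in> Free.span (os_relations \<alpha> N)"
      using r(1) by simp
  qed
qed

lemma phi_in_span_Bset:
  assumes inj: "inj_on \<alpha> {..<N}" and \<sigma>: "\<sigma> \<in> calB \<alpha> N"
  shows "\<exists>c. \<forall>x\<in>regular_set \<alpha> N. phi \<alpha> \<sigma> x = (\<Sum>b\<in>Bset \<alpha> N. c b * phi \<alpha> b x)"
proof -
  have "bracket \<sigma> \<in> supported_on (calB \<alpha> N)"
    using \<sigma> by (auto simp: supported_on_def bracket_def)
  then obtain r where r: "r \<in> Free.span (os_relations \<alpha> N)"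
    and d: "bracket \<sigma> - r \<in> supported_on (Bset \<alpha> N)"
    using supported_calB_decompose[OF inj] by blast
  have rel: "r \<in> phi_relations \<alpha> N"
    using r span_os_relations_subset[OF inj] by blast
  show ?thesis
  proof (intro exI ballI)
    fix x
    assume x: "x \<in> regular_set \<alpha> N"
    have "phi \<alpha> \<sigma> x = (\<Sum>\<tau>\<in>calB \<alpha> N. bracket \<sigma> \<tau> * phi \<alpha> \<tau> x)"
      using \<sigma> by (simp add: sum_bracket finite_calB)
    also have "\<dots> = (\<Sum>\<tau>\<in>calB \<alpha> N. (bracket \<sigma> - r) \<tau> * phi \<alpha> \<tau> x)
        + (\<Sum>\<tau>\<in>calB \<alpha> N. r \<tau> * phi \<alpha> \<tau> x)"
      by (simp add: algebra_simps sum_subtractf)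
    also have "(\<Sum>\<tau>\<in>calB \<alpha> N. r \<tau> * phi \<alpha> \<tau> x) = 0"
      using rel x by (simp add: phi_relations_def)
    also have "(\<Sum>\<tau>\<in>calB \<alpha> N. (bracket \<sigma> - r) \<tau> * phi \<alpha> \<tau> x)
        = (\<Sum>b\<in>Bset \<alpha> N. (bracket \<sigma> - r) b * phi \<alpha> b x)"
      by (rule sum_calB_supported_on_Bset[OF d])
    finally show "phi \<alpha> \<sigma> x = (\<Sum>b\<in>Bset \<alpha> N. (bracket \<sigma> - r) b * phi \<alpha> b x)"
      by simp
  qed
qed

theorem mainTheorem9:
  fixes \<alpha> :: "nat \<Rightarrow> ('n::finite \<Rightarrow> 'k::field_char_0)" and N :: nat
  assumes inj: "inj_on \<alpha> {..<N}"
    and nonzero: "\<And>i. i < N \<Longrightarrow> \<alpha> i \<noteq> 0"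
    and spanning: "module.span vscale (\<alpha> ` {..<N}) = UNIV"
  shows "(\<forall>c :: nat set \<Rightarrow> 'k.
            (\<forall>x\<in>regular_set \<alpha> N. (\<Sum>b\<in>Bset \<alpha> N. c b * phi \<alpha> b x) = 0)
            \<longrightarrow> (\<forall>b\<in>Bset \<alpha> N. c b = 0))
       \<and> (\<forall>\<sigma>\<in>calB \<alpha> N. \<exists>c :: nat set \<Rightarrow> 'k.
            \<forall>x\<in>regular_set \<alpha> N. phi \<alpha> \<sigma> x = (\<Sum>b\<in>Bset \<alpha> N. c b * phi \<alpha> b x))
       \<and> {c :: nat set \<Rightarrow> 'k. (\<forall>\<tau>. \<tau> \<notin> calB \<alpha> N \<longrightarrow> c \<tau> = 0) \<and>
            (\<forall>x\<in>regular_set \<alpha> N. (\<Sum>\<sigma>\<in>calB \<alpha> N. c \<sigma> * phi \<alpha> \<sigma> x) = 0)}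
         = module.span fscale
             {os_rel \<alpha> \<sigma> a | \<sigma> a. \<sigma> \<in> calB \<alpha> N \<and> a < N \<and> a \<notin> \<sigma>}"
proof -
  have inf: "infinite (UNIV :: 'k set)"
    by (rule infinite_UNIV_char_0)
  show ?thesis
    using Bset_phi_independent[OF inf inj nonzero] phi_in_span_Bset[OF inj]
      phi_relations_eq_span_os_relations[OF inf inj nonzero]
    by (auto simp: phi_relations_def supported_on_def os_relations_def)
qed

end
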